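(* Let $q$ be a prime power and $n,k,\alpha$ positive integers with $k\mid n$, $\alpha\ge3$ and $n\ge\alpha k$. Then $$B_q(n,k,(\alpha-1)k;\alpha)\ge q^{\frac{n-\alpha k+1}{\alpha-1}}.$$
   Context: For a prime power $q$, $\mathcal{G}_q(n,k)$ denotes the set of all $k$-dimensional subspaces of $\mathbb{F}_q^n$. An $\alpha$-$(n,k,\delta)_q^c$ covering Grassmannian code is a subset $\mathcal{C}\subseteq\mathcal{G}_q(n,k)$ (no repeated codewords) such that every set of $\alpha$ distinct codewords of $\mathcal{C}$ spans a subspace of $\mathbb{F}_q^n$ of dimension at least $k+\delta$. $B_q(n,k,\delta;\alpha)$ denotes the maximum size of an $\alpha$-$(n,k,\delta)_q^c$ code. *)

theory Defs
  imports "HOL-Analysis.Analysis"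
begin

text \<open>The ambient space F_q^n is modelled as the vector type 'a^'n over a finite
field 'a (with q = CARD('a)) and n = CARD('n).\<close>

definition grassmannian :: "nat \<Rightarrow> ('a::field ^ 'n) set set" where
  "grassmannian k = {U. vec.subspace U \<and> vec.dim U = k}"

definition covering_grassmannian_code ::
  "nat \<Rightarrow> nat \<Rightarrow> nat \<Rightarrow> ('a::field ^ 'n) set set \<Rightarrow> bool" where
  "covering_grassmannian_code k \<delta> \<alpha> C \<longleftrightarrow>
     C \<subseteq> grassmannian k \<and>
     (\<forall>S \<subseteq> C. card S = \<alpha> \<longrightarrow> vec.dim (vec.span (\<Union>S)) \<ge> k + \<delta>)"

definition B_cov :: "'a::{field,finite} itself \<Rightarrow> 'n::finite itself \<Rightarrow> nat \<Rightarrow> nat \<Rightarrow> nat \<Rightarrow> nat" where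
  "B_cov _ _ k \<delta> \<alpha> =
     Max {card C | C :: ('a ^ 'n) set set. covering_grassmannian_code k \<delta> \<alpha> C}"

end

theory Submission
  imports Defs
begin

text \<open>A greedy construction. Call a code of k-spaces a direct sum code if any at most \<alpha> of
  its members span a space of dimension k times their number; such a code is an
  \<alpha>-(n, k, (\<alpha>-1)k) covering code. A direct sum code with N members is extended by the span of a
  list x_1, ..., x_k in which no x_i lies in the span of x_1, ..., x_(i-1) together with some
  \<alpha> - 1 members. For a fixed choice of members less than a fraction q^(k\<alpha>) / ((q - 1) q^n) of
  all lists fail, so by a union bound over the (N choose \<alpha>-1) \<le> N^(\<alpha>-1) / 2 choices a good
  list exists as long as N^(\<alpha>-1) < q^(n-\<alpha>k+1).\<close>

lemma card_span_le_card_pow_dim: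
  fixes W :: "('a::{field,finite} ^ 'n) set"
  shows "card (vec.span W) \<le> CARD('a) ^ vec.dim W"
proof -
  obtain B where B: "B \<subseteq> W" "vec.independent B" "W \<subseteq> vec.span B" "card B = vec.dim W"
    using vec.basis_exists[of W] by blast
  have fB: "finite B" by simp
  have "vec.span W = vec.span B"
    using B by (meson order_antisym vec.span_minimal vec.span_mono vec.subspace_span)
  also have "\<dots> = range (\<lambda>u. \<Sum>v\<in>B. u v *s v)" by (rule vec.span_finite[OF fB])
  also have "\<dots> = (\<lambda>u. \<Sum>v\<in>B. u v *s v) ` (B \<rightarrow>\<^sub>E UNIV)"
  proof
    show "range (\<lambda>u. \<Sum>v\<in>B. u v *s v) \<subseteq> (\<lambda>u. \<Sum>v\<in>B. u v *s v) ` (B \<rightarrow>\<^sub>E UNIV)"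
    proof
      fix y assume "y \<in> range (\<lambda>u. \<Sum>v\<in>B. u v *s v)"
      then obtain u where y: "y = (\<Sum>v\<in>B. u v *s v)" by blast
      have "y = (\<Sum>v\<in>B. restrict u B v *s v)" unfolding y by (rule sum.cong) auto
      moreover have "restrict u B \<in> B \<rightarrow>\<^sub>E UNIV" by simp
      ultimately show "y \<in> (\<lambda>u. \<Sum>v\<in>B. u v *s v) ` (B \<rightarrow>\<^sub>E UNIV)" by blast
    qed
  qed auto
  finally have "card (vec.span W) \<le> card (B \<rightarrow>\<^sub>E (UNIV::'a set))"
    by (simp add: card_image_le)
  also have "\<dots> = CARD('a) ^ vec.dim W" using B by (simp add: card_PiE fB)
  finally show ?thesis .
qed

lemma dim_Un_span_right:
  fixes A B :: "('a::field ^ 'n) set"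
  shows "vec.dim (A \<union> vec.span B) = vec.dim (A \<union> B)"
proof (rule vec.span_eq_dim)
  show "vec.span (A \<union> vec.span B) = vec.span (A \<union> B)"
    unfolding vec.span_eq
    using vec.span_superset[of "A \<union> B"] vec.span_mono[of B "A \<union> B"]
      vec.span_superset[of "A \<union> vec.span B"] vec.span_superset[of B]
      vec.span_mono[of B "A \<union> vec.span B"]
    by blast
qed

fun enters_span :: "('a::field ^ 'n) set \<Rightarrow> ('a ^ 'n) list \<Rightarrow> bool" where
  "enters_span W [] \<longleftrightarrow> False"
| "enters_span W (x # xs) \<longleftrightarrow> x \<in> vec.span W \<or> enters_span (insert x W) xs"

lemma enters_span_mono:
  fixes W W' :: "('a::field ^ 'n) set"
  assumes "vec.span W \<subseteq> vec.span W'" "enters_span W xs"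
  shows "enters_span W' xs"
  using assms
proof (induction xs arbitrary: W W')
  case Nil
  then show ?case by simp
next
  case (Cons x xs)
  show ?case
  proof (cases "x \<in> vec.span W")
    case True
    then show ?thesis using Cons.prems by auto
  next
    case False
    have "insert x W \<subseteq> vec.span (insert x W')"
      using Cons.prems(1) vec.span_superset[of W] vec.span_mono[of W' "insert x W'"]
        vec.span_superset[of "insert x W'"] by blast
    then have "vec.span (insert x W) \<subseteq> vec.span (insert x W')"
      by (meson vec.span_minimal vec.subspace_span)
    with Cons.IH False Cons.prems(2) show ?thesis by simp
  qed
qed

lemma dim_Un_set_if_not_enters_span:
  fixes W :: "('a::field ^ 'n) set"
  assumes "\<not> enters_span W xs"
  shows "vec.dim (W \<union> set xs) = vec.dim W + length xs"
  using assms
proof (induction xs arbitrary: W)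
  case Nil
  then show ?case by simp
next
  case (Cons x xs)
  then have "x \<notin> vec.span W" "\<not> enters_span (insert x W) xs" by auto
  with Cons.IH[of "insert x W"] show ?case by (simp add: vec.dim_insert)
qed

lemma finite_lists_length_UNIV [simp]: "finite {xs :: ('a::finite) list. length xs = k}"
  using finite_lists_length_eq[of "UNIV::'a set" k] by simp

lemma card_lists_length_UNIV: "card {xs :: ('a::finite) list. length xs = k} = CARD('a) ^ k"
  using card_lists_length_eq[of "UNIV::'a set" k] by simp

text \<open>Multiplying by the number of vectors avoids a division: for k > 0 the bound reads
  Q^(k-1) q^d (1 + q + ... + q^(k-1)) with Q = q^n.\<close>
lemma card_enters_span_lists:
  fixes W :: "('a::{field,finite} ^ 'n) set"
  assumes "vec.dim W \<le> d"
  shows "card {xs. length xs = k \<and> enters_span W xs} * CARD('a^'n)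
           \<le> CARD('a^'n) ^ k * (CARD('a) ^ d * (\<Sum>i<k. CARD('a) ^ i))"
  using assms
proof (induction k arbitrary: W d)
  case 0
  then show ?case by simp
next
  case (Suc k)
  let ?Q = "CARD('a^'n)" and ?q = "CARD('a)"
  define L where "L = {xs::('a^'n) list. length xs = k}"
  define S where "S = (\<lambda>x. {xs. length xs = k \<and> enters_span (insert x W) xs})"
  have finS: "finite (S x)" for x
    unfolding S_def by (rule finite_subset[OF _ finite_lists_length_UNIV[of k]]) auto
  have "{xs. length xs = Suc k \<and> enters_span W xs}
          \<subseteq> (\<lambda>(x, xs). x # xs) ` (vec.span W \<times> L \<union> (SIGMA x:UNIV. S x))"
    by (auto simp: L_def S_def length_Suc_conv)
  then have "card {xs. length xs = Suc k \<and> enters_span W xs}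
               \<le> card ((\<lambda>(x, xs). x # xs) ` (vec.span W \<times> L \<union> (SIGMA x:UNIV. S x)))"
    by (rule card_mono[rotated]) (simp add: L_def finS)
  also have "\<dots> \<le> card (vec.span W \<times> L \<union> (SIGMA x:UNIV. S x))"
    by (rule card_image_le) (simp add: L_def finS)
  also have "\<dots> \<le> card (vec.span W \<times> L) + card (SIGMA x:UNIV. S x)"
    by (rule card_Un_le)
  also have "\<dots> = card (vec.span W) * ?Q ^ k + (\<Sum>x\<in>UNIV. card (S x))"
    using card_SigmaI[of UNIV S] finS
    by (simp add: L_def card_cartesian_product card_lists_length_UNIV)
  finally have "card {xs. length xs = Suc k \<and> enters_span W xs} * ?Q
      \<le> card (vec.span W) * ?Q ^ k * ?Q + (\<Sum>x\<in>UNIV. card (S x)) * ?Q"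
    unfolding distrib_right[symmetric] by (rule mult_le_mono1)
  also have "\<dots> \<le> ?q ^ d * ?Q ^ k * ?Q + ?Q * (?Q ^ k * (?q ^ Suc d * (\<Sum>i<k. ?q ^ i)))"
  proof (rule add_mono)
    have "card (vec.span W) \<le> ?q ^ d"
      using card_span_le_card_pow_dim[of W] power_increasing[of "vec.dim W" d ?q] Suc.prems
      by simp
    then show "card (vec.span W) * ?Q ^ k * ?Q \<le> ?q ^ d * ?Q ^ k * ?Q"
      by simp
    have "card (S x) * ?Q \<le> ?Q ^ k * (?q ^ Suc d * (\<Sum>i<k. ?q ^ i))" for x
      unfolding S_def by (rule Suc.IH) (use Suc.prems in \<open>simp add: vec.dim_insert\<close>)
    then have "(\<Sum>x\<in>UNIV. card (S x) * ?Q)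
        \<le> (\<Sum>x\<in>(UNIV::('a^'n) set). ?Q ^ k * (?q ^ Suc d * (\<Sum>i<k. ?q ^ i)))"
      by (intro sum_mono)
    then show "(\<Sum>x\<in>UNIV. card (S x)) * ?Q \<le> ?Q * (?Q ^ k * (?q ^ Suc d * (\<Sum>i<k. ?q ^ i)))"
      by (simp add: sum_distrib_right)
  qed
  also have "\<dots> = ?Q ^ Suc k * (?q ^ d * (1 + ?q * (\<Sum>i<k. ?q ^ i)))"
    by (simp add: algebra_simps)
  also have "1 + ?q * (\<Sum>i<k. ?q ^ i) = (\<Sum>i<Suc k. ?q ^ i)"
    by (simp add: sum.lessThan_Suc_shift sum_distrib_left del: sum.lessThan_Suc)
  finally show ?case .
qed

lemma obtain_superset_with_card:
  assumes "finite C" "T \<subseteq> C" "card T \<le> m" "m \<le> card C"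
  obtains S where "T \<subseteq> S" "S \<subseteq> C" "card S = m"
proof -
  have "m - card T \<le> card (C - T)"
    using assms by (simp add: card_Diff_subset finite_subset)
  then obtain R where R: "R \<subseteq> C - T" "card R = m - card T" "finite R"
    by (rule obtain_subset_with_card_n)
  have "card (T \<union> R) = card T + card R"
    using R assms by (intro card_Un_disjoint) (auto intro: finite_subset)
  with R assms that[of "T \<union> R"] show ?thesis by auto
qed

lemma dim_Union_grassmannian_le:
  fixes S :: "('a::field ^ 'n) set set"
  assumes "S \<subseteq> grassmannian k" "finite S"
  shows "vec.dim (\<Union>S) \<le> k * card S"
proof -
  have "\<exists>B. finite B \<and> vec.span B = U \<and> card B = k" if "U \<in> S" for U
  proof -
    have "vec.subspace U" "vec.dim U = k"
      using that assms(1) unfolding grassmannian_def by auto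
    then show ?thesis by (metis vec.basis_subspace_exists)
  qed
  then obtain B where B: "\<And>U. U \<in> S \<Longrightarrow> finite (B U) \<and> vec.span (B U) = U \<and> card (B U) = k"
    by metis
  have "\<Union>S \<subseteq> vec.span (\<Union>U\<in>S. B U)"
  proof
    fix x assume "x \<in> \<Union>S"
    then obtain U where "U \<in> S" "x \<in> vec.span (B U)" using B by blast
    then show "x \<in> vec.span (\<Union>U\<in>S. B U)" using vec.span_mono[of "B U"] by blast
  qed
  then have "vec.dim (\<Union>S) \<le> card (\<Union>U\<in>S. B U)"
    by (rule vec.dim_le_card) (use assms B in auto)
  also have "\<dots> \<le> (\<Sum>U\<in>S. card (B U))" by (rule card_UN_le) (use assms in auto)
  also have "\<dots> = k * card S" using B by simp
  finally show ?thesis .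
qed

text \<open>By dim_Union_grassmannian_le the inequality is an equality: any at most \<alpha> members of C
  form a direct sum.\<close>
definition direct_sum_code :: "nat \<Rightarrow> nat \<Rightarrow> ('a::field ^ 'n) set set \<Rightarrow> bool" where
  "direct_sum_code k \<alpha> C \<longleftrightarrow> finite C \<and> C \<subseteq> grassmannian k \<and>
     (\<forall>S\<subseteq>C. card S \<le> \<alpha> \<longrightarrow> k * card S \<le> vec.dim (\<Union>S))"

lemma covering_grassmannian_code_if_direct_sum_code:
  assumes "direct_sum_code k \<alpha> C" "\<alpha> \<ge> 1"
  shows "covering_grassmannian_code k ((\<alpha> - 1) * k) \<alpha> C"
proof -
  have "k + (\<alpha> - 1) * k = k * \<alpha>"
    using assms(2) by (simp add: algebra_simps diff_mult_distrib)
  then show ?thesis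
    using assms(1) unfolding covering_grassmannian_code_def direct_sum_code_def by auto
qed

lemma card_le_B_cov:
  fixes C :: "('a::{field,finite} ^ 'n::finite) set set"
  assumes "covering_grassmannian_code k \<delta> \<alpha> C"
  shows "card C \<le> B_cov TYPE('a) TYPE('n) k \<delta> \<alpha>"
  unfolding B_cov_def
proof (rule Max_ge)
  show "finite {card C |C :: ('a^'n) set set. covering_grassmannian_code k \<delta> \<alpha> C}"
    by (rule finite_subset[of _ "card ` UNIV"]) auto
qed (use assms in auto)

lemma exists_list_not_enters_span:
  fixes \<W> :: "('a::{field,finite} ^ 'n) set set"
  assumes "finite \<W>" "\<And>W. W \<in> \<W> \<Longrightarrow> vec.dim W \<le> d"
    and "card \<W> * (CARD('a) ^ d * (\<Sum>i<k. CARD('a) ^ i)) < CARD('a) ^ CARD('n)"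
  obtains xs where "length xs = k" "\<And>W. W \<in> \<W> \<Longrightarrow> \<not> enters_span W xs"
proof -
  let ?Q = "CARD('a^'n)" and ?M = "CARD('a) ^ d * (\<Sum>i<k. CARD('a) ^ i)"
  define Bad where "Bad = (\<Union>W\<in>\<W>. {xs. length xs = k \<and> enters_span W xs})"
  have "card Bad * ?Q \<le> (\<Sum>W\<in>\<W>. card {xs. length xs = k \<and> enters_span W xs}) * ?Q"
    unfolding Bad_def by (intro mult_le_mono1 card_UN_le assms(1))
  also have "\<dots> \<le> (\<Sum>W\<in>\<W>. ?Q ^ k * ?M)"
    unfolding sum_distrib_right by (intro sum_mono card_enters_span_lists assms(2))
  also have "\<dots> = ?Q ^ k * (card \<W> * ?M)" by simp
  also have "\<dots> < ?Q ^ k * ?Q" using assms(3) by simp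
  finally have "card Bad < card {xs :: ('a^'n) list. length xs = k}"
    by (simp add: card_lists_length_UNIV)
  moreover have "finite Bad"
    unfolding Bad_def by (rule finite_subset[OF _ finite_lists_length_UNIV[of k]]) auto
  ultimately have "\<not> {xs :: ('a^'n) list. length xs = k} \<subseteq> Bad"
    using card_mono leD by blast
  then show ?thesis using that unfolding Bad_def by blast
qed

lemma direct_sum_code_insert_span:
  fixes C :: "('a::field ^ 'n) set set"
  assumes C: "direct_sum_code k \<alpha> C" and "k > 0" "\<alpha> \<ge> 2" "length xs = k"
    and avoid: "\<And>T. T \<subseteq> C \<Longrightarrow> card T < \<alpha> \<Longrightarrow> \<not> enters_span (\<Union>T) xs"
  shows "vec.span (set xs) \<notin> C" "direct_sum_code k \<alpha> (insert (vec.span (set xs)) C)"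
proof -
  define U where "U = vec.span (set xs)"
  have fC: "finite C" and gC: "C \<subseteq> grassmannian k"
    and dimC: "\<And>S. S \<subseteq> C \<Longrightarrow> card S \<le> \<alpha> \<Longrightarrow> k * card S \<le> vec.dim (\<Union>S)"
    using C unfolding direct_sum_code_def by auto
  have dim_Un_U: "vec.dim (\<Union>T \<union> U) = vec.dim (\<Union>T) + k" if "T \<subseteq> C" "card T < \<alpha>" for T
    using dim_Un_set_if_not_enters_span[OF avoid[OF that]] assms(4)
    unfolding U_def by (simp add: dim_Un_span_right)
  have dimU: "vec.dim U = k" using dim_Un_U[of "{}"] assms(3) by simp
  have UC: "U \<notin> C"
  proof
    assume "U \<in> C"
    then have "vec.dim (U \<union> U) = vec.dim U + k" using dim_Un_U[of "{U}"] assms(3) by simp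
    then show False using assms(2) by simp
  qed
  then show "vec.span (set xs) \<notin> C" unfolding U_def .
  have "direct_sum_code k \<alpha> (insert U C)"
    unfolding direct_sum_code_def
  proof (intro conjI allI impI)
    show "finite (insert U C)" using fC by simp
    show "insert U C \<subseteq> grassmannian k" using gC dimU unfolding U_def grassmannian_def by simp
    fix S assume S: "S \<subseteq> insert U C" "card S \<le> \<alpha>"
    show "k * card S \<le> vec.dim (\<Union>S)"
    proof (cases "U \<in> S")
      case False
      then show ?thesis using S dimC by blast
    next
      case True
      define T where "T = S - {U}"
      have TC: "T \<subseteq> C" using S UC unfolding T_def by blast
      have cardS: "card S = Suc (card T)"
        unfolding T_def using True S(1) fC by (intro card_Suc_Diff1[symmetric]) (auto intro: finite_subset)
      have "\<Union>S = \<Union>T \<union> U" using True unfolding T_def by blast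
      then have "vec.dim (\<Union>S) = vec.dim (\<Union>T) + k" using dim_Un_U[OF TC] cardS S(2) by simp
      moreover have "k * card T \<le> vec.dim (\<Union>T)" using dimC[OF TC] cardS S(2) by simp
      ultimately show ?thesis using cardS by simp
    qed
  qed
  then show "direct_sum_code k \<alpha> (insert (vec.span (set xs)) C)" unfolding U_def .
qed

text \<open>Subsets of size m suffice because enters_span is monotone; m is smaller than \<alpha> - 1
  only while C itself is.\<close>
lemma direct_sum_code_extend:
  fixes C :: "('a::{field,finite} ^ 'n) set set"
  assumes C: "direct_sum_code k \<alpha> C" and "k > 0" "\<alpha> \<ge> 2"
  defines "m \<equiv> min (card C) (\<alpha> - 1)"
  assumes count: "(card C choose m) * (CARD('a) ^ (k * m) * (\<Sum>i<k. CARD('a) ^ i))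
                    < CARD('a) ^ CARD('n)"
  shows "\<exists>U. U \<notin> C \<and> direct_sum_code k \<alpha> (insert U C)"
proof -
  have fC: "finite C" and gC: "C \<subseteq> grassmannian k"
    using C unfolding direct_sum_code_def by auto
  let ?\<W> = "Union ` {S. S \<subseteq> C \<and> card S = m}"
  have "finite {S. S \<subseteq> C \<and> card S = m}"
    using fC by (auto intro: finite_subset[of _ "Pow C"])
  then have fin: "finite ?\<W>" by simp
  have "card ?\<W> \<le> card {S. S \<subseteq> C \<and> card S = m}" by (rule card_image_le) fact
  also have "\<dots> = card C choose m" using fC by (rule n_subsets)
  finally have small: "card ?\<W> * (CARD('a) ^ (k * m) * (\<Sum>i<k. CARD('a) ^ i)) < CARD('a) ^ CARD('n)"
    using count by (meson le_less_trans mult_le_mono1)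
  have dim: "vec.dim W \<le> k * m" if "W \<in> ?\<W>" for W
  proof -
    from that obtain S where S: "S \<subseteq> C" "card S = m" "W = \<Union>S" by auto
    have "vec.dim (\<Union>S) \<le> k * card S"
      using S(1) gC fC by (intro dim_Union_grassmannian_le) (auto intro: finite_subset)
    then show ?thesis using S by simp
  qed
  obtain xs where xs: "length xs = k" "\<And>W. W \<in> ?\<W> \<Longrightarrow> \<not> enters_span W xs"
    using exists_list_not_enters_span[OF fin dim small] by blast
  have "\<not> enters_span (\<Union>T) xs" if T: "T \<subseteq> C" "card T < \<alpha>" for T
  proof -
    have "card T \<le> m" unfolding m_def using T card_mono[OF fC] by simp
    moreover have "m \<le> card C" unfolding m_def by simp
    ultimately obtain S where S: "T \<subseteq> S" "S \<subseteq> C" "card S = m"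
      by (rule obtain_superset_with_card[OF fC T(1)])
    then have "\<not> enters_span (\<Union>S) xs" using xs(2) by blast
    moreover have "vec.span (\<Union>T) \<subseteq> vec.span (\<Union>S)" using S(1) by (intro vec.span_mono) blast
    ultimately show ?thesis using enters_span_mono by blast
  qed
  then show ?thesis
    using direct_sum_code_insert_span[OF C assms(2,3) xs(1)] by blast
qed

lemma geometric_sum_mult_diff_one_less:
  fixes q :: nat
  assumes "q > 0"
  shows "(\<Sum>i<k. q ^ i) * (q - 1) < q ^ k"
proof (induction k)
  case 0
  then show ?case by simp
next
  case (Suc k)
  have "(\<Sum>i<Suc k. q ^ i) * (q - 1) = (\<Sum>i<k. q ^ i) * (q - 1) + q ^ k * (q - 1)"
    by (simp add: algebra_simps)
  also have "\<dots> < q ^ k + q ^ k * (q - 1)" using Suc.IH by simp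
  also have "\<dots> = q ^ Suc k" using assms by (cases q) (simp_all add: algebra_simps)
  finally show ?case .
qed

text \<open>The two slack factors: N choose (\<alpha>-1) \<le> N^(\<alpha>-1) / 2 and
  1 + q + ... + q^(k-1) < q^k / (q - 1) \<le> 2 q^(k-1).\<close>
lemma choose_mult_power_less:
  fixes q n k \<alpha> N :: nat
  assumes q: "q \<ge> 2" and \<alpha>: "\<alpha> \<ge> 3" and n: "\<alpha> * k \<le> n"
    and N: "N ^ (\<alpha> - 1) < q ^ (n - \<alpha> * k + 1)"
  defines "m \<equiv> min N (\<alpha> - 1)"
  shows "(N choose m) * (q ^ (k * m) * (\<Sum>i<k. q ^ i)) < q ^ n"
proof -
  define G where "G = (\<Sum>i<k. q ^ i)"
  have G: "G * (q - 1) < q ^ k"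
    unfolding G_def using q by (intro geometric_sum_mult_diff_one_less) simp
  show ?thesis
  proof (cases "\<alpha> - 1 \<le> N")
    case True
    define r where "r = \<alpha> - 1"
    have m: "m = r" unfolding m_def r_def using True by simp
    have "2 * (N choose r) \<le> fact r * (N choose r)"
      using fact_ge_self[of r] \<alpha> unfolding r_def by (intro mult_le_mono1) linarith
    also have "\<dots> \<le> N ^ r" by (metis binomial_fact_pow mult.commute)
    finally have choose: "2 * (N choose r) < q ^ (n - \<alpha> * k + 1)" using N unfolding r_def by linarith
    have "q * ((N choose r) * (q ^ (k * r) * G)) \<le> (2 * (q - 1)) * ((N choose r) * (q ^ (k * r) * G))"
      using q by (intro mult_le_mono1) simp
    also have "\<dots> = (2 * (N choose r) * q ^ (k * r)) * (G * (q - 1))" by (simp add: ac_simps)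
    also have "\<dots> < (q ^ (n - \<alpha> * k + 1) * q ^ (k * r)) * q ^ k"
      using choose G q by (intro mult_strict_mono mult_strict_right_mono) auto
    also have "\<dots> = q * q ^ n"
    proof -
      have "n - \<alpha> * k + 1 + k * r + k = Suc n"
        using n \<alpha> unfolding r_def by (cases \<alpha>) (simp_all add: algebra_simps)
      then show ?thesis by (metis power_Suc power_add)
    qed
    finally show ?thesis unfolding m G_def by simp
  next
    case False
    then have m: "m = N" unfolding m_def by simp
    have "G * 1 \<le> G * (q - 1)" using q by (intro mult_le_mono2) simp
    then have "G < q ^ k" using G by linarith
    then have "q ^ (k * N) * G < q ^ (k * N) * q ^ k" using q by simp
    also have "\<dots> = q ^ (k * Suc N)" by (simp add: power_add algebra_simps)
    also have "\<dots> \<le> q ^ n"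
    proof (rule power_increasing)
      have "k * Suc N \<le> k * \<alpha>" using False by (intro mult_le_mono2) linarith
      then show "k * Suc N \<le> n" using n by (simp add: mult.commute)
    qed (use q in simp)
    finally show ?thesis unfolding m G_def by simp
  qed
qed

lemma two_le_card_field: "2 \<le> CARD('a::{field,finite})"
proof -
  have "card {0::'a, 1} \<le> CARD('a)" by (rule card_mono) auto
  then show ?thesis by simp
qed

lemma exists_direct_sum_code:
  fixes k \<alpha> N :: nat
  assumes "k > 0" "\<alpha> \<ge> 3" "\<alpha> * k \<le> CARD('n)"
    and "\<And>M. M < N \<Longrightarrow> M ^ (\<alpha> - 1) < CARD('a) ^ (CARD('n) - \<alpha> * k + 1)"
  shows "\<exists>C :: ('a::{field,finite} ^ 'n) set set. direct_sum_code k \<alpha> C \<and> card C = N"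
  using assms(4)
proof (induction N)
  case 0
  have "direct_sum_code k \<alpha> ({} :: ('a ^ 'n) set set)" by (simp add: direct_sum_code_def)
  then show ?case by (intro exI[of _ "{}"]) simp
next
  case (Suc N)
  then obtain C :: "('a ^ 'n) set set" where C: "direct_sum_code k \<alpha> C" "card C = N"
    by (meson less_SucI)
  have "(card C choose min (card C) (\<alpha> - 1))
          * (CARD('a) ^ (k * min (card C) (\<alpha> - 1)) * (\<Sum>i<k. CARD('a) ^ i)) < CARD('a) ^ CARD('n)"
    using C(2) Suc.prems[of N] assms(2,3) by (intro choose_mult_power_less two_le_card_field) auto
  then obtain U where "U \<notin> C" "direct_sum_code k \<alpha> (insert U C)"
    using direct_sum_code_extend[OF C(1) assms(1)] assms(2) by auto
  moreover have "finite C" using C(1) by (simp add: direct_sum_code_def)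
  ultimately show ?case using C(2) by (intro exI[of _ "insert U C"]) simp
qed

lemma power_less_if_less_ceiling_powr:
  fixes M q e r :: nat
  assumes "q > 0" "r > 0" "M < nat \<lceil>real q powr (real e / real r)\<rceil>"
  shows "M ^ r < q ^ e"
proof -
  have "real M < real q powr (real e / real r)" using assms(3) by linarith
  then have "real M ^ r < (real q powr (real e / real r)) ^ r"
    by (intro power_strict_mono) (use assms(2) in auto)
  also have "\<dots> = real q ^ e"
    using assms(1,2) by (simp add: powr_power powr_realpow)
  finally show ?thesis by (simp flip: of_nat_power)
qed

theorem mainTheorem14:
  fixes q n k \<alpha> :: nat
  assumes "CARD('a::{field,finite}) = q"
    and "CARD('n::finite) = n"
    and "k > 0" and "\<alpha> \<ge> 3" and "k dvd n" and "n \<ge> \<alpha> * k"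
  shows "real (B_cov TYPE('a) TYPE('n) k ((\<alpha> - 1) * k) \<alpha>)
           \<ge> real q powr ((real n - real \<alpha> * real k + 1) / (real \<alpha> - 1))"
proof -
  define R where "R = real q powr ((real n - real \<alpha> * real k + 1) / (real \<alpha> - 1))"
  have R: "R = real q powr (real (n - \<alpha> * k + 1) / real (\<alpha> - 1))"
    unfolding R_def using assms(4,6) by (simp add: of_nat_diff ac_simps)
  have "0 < q" "0 < \<alpha> - 1" using two_le_card_field[where 'a='a] assms(1,4) by auto
  then have "M ^ (\<alpha> - 1) < q ^ (n - \<alpha> * k + 1)" if "M < nat \<lceil>R\<rceil>" for M
    using that unfolding R by (rule power_less_if_less_ceiling_powr)
  then obtain C :: "('a ^ 'n) set set" where "direct_sum_code k \<alpha> C" "card C = nat \<lceil>R\<rceil>"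
    using exists_direct_sum_code[of k \<alpha> "nat \<lceil>R\<rceil>"] assms by auto
  then have "nat \<lceil>R\<rceil> \<le> B_cov TYPE('a) TYPE('n) k ((\<alpha> - 1) * k) \<alpha>"
    using covering_grassmannian_code_if_direct_sum_code card_le_B_cov assms(4)
    by (metis le_trans one_le_numeral)
  then show ?thesis using real_nat_ceiling_ge[of R] unfolding R_def by linarith
qed

end
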